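(* $KU^+_1(\mathcal{O}(S^2_q))$ is non-trivial.
   Context: $q$ is the deformation parameter (a real number). The standard Podleś sphere $\mathcal{O}(S^2_q)$ is the algebra generated by $z_{-1},z_0,z_1$ subject to $z_0^2-qz_1z_{-1}-q^{-1}z_{-1}z_1=1$, $(1-q^2)z_0^2+qz_{-1}z_1-qz_1z_{-1}=0$, $z_{-1}z_0=q^2z_0z_{-1}$, $z_0z_1=q^2z_1z_0$, with $*$-structure $z_i^*=(-q)^iz_{-i}$ ($i=-1,0,1$). For a $*$-algebra $\mathcal{A}$ and $\epsilon=\pm1$, $U^\epsilon_n(\mathcal{A})$ is the group of $2n\times2n$ matrices $M=\begin{pmatrix}A&B\\C&D\end{pmatrix}$ over $\mathcal{A}$ with $M^\star M=MM^\star=I_{2n}$, where $M^\star=\begin{pmatrix}D^\dagger&\epsilon B^\dagger\\ \epsilon C^\dagger&A^\dagger\end{pmatrix}$ and $\dagger$ is the transpose composed with entrywise $*$; $U^\epsilon(\mathcal{A})=\mathrm{colim}_nU^\epsilon_n(\mathcal{A})$. The Hermitian $K$-group $KU^\epsilon_1(\mathcal{A})=\pi_1(BU^\epsilon(\mathcal{A})^+)$ (Quillen plus construction) is the abelianization $U^\epsilon(\mathcal{A})/[U^\epsilon(\mathcal{A}),U^\epsilon(\mathcal{A})]$. Here $KU^+_1$ denotes $KU^\epsilon_1$ with $\epsilon=+1$. *)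

theory Defs
  imports Complex_Main "HOL-Algebra.Algebra"
begin

datatype gen = Zm | Z0 | Zp

(* elements of the free complex algebra: finitely supported coefficient functions on words *)
type_synonym fa = "gen list \<Rightarrow> complex"

definition fa_fin :: "fa \<Rightarrow> bool" where
  "fa_fin f \<longleftrightarrow> finite {w. f w \<noteq> 0}"

definition fa_zero :: fa where "fa_zero = (\<lambda>w. 0)"
definition fa_word :: "gen list \<Rightarrow> fa" where "fa_word v = (\<lambda>w. if w = v then 1 else 0)"
definition fa_one :: fa where "fa_one = fa_word []"
definition fa_add :: "fa \<Rightarrow> fa \<Rightarrow> fa" where "fa_add f g = (\<lambda>w. f w + g w)"
definition fa_smult :: "complex \<Rightarrow> fa \<Rightarrow> fa" where "fa_smult c f = (\<lambda>w. c * f w)"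
definition fa_diff :: "fa \<Rightarrow> fa \<Rightarrow> fa" where "fa_diff f g = (\<lambda>w. f w - g w)"

definition fa_mult :: "fa \<Rightarrow> fa \<Rightarrow> fa" where
  "fa_mult f g = (\<lambda>w. \<Sum>i\<le>length w. f (take i w) * g (drop i w))"

fun gen_idx :: "gen \<Rightarrow> int" where
  "gen_idx Zm = -1" | "gen_idx Z0 = 0" | "gen_idx Zp = 1"

fun gen_swap :: "gen \<Rightarrow> gen" where
  "gen_swap Zm = Zp" | "gen_swap Z0 = Z0" | "gen_swap Zp = Zm"

(* z_i^* = (-q)^i z_{-i}, extended as an antilinear anti-multiplicative involution:
   (c x_1 ... x_k)^* = conj c * x_k^* ... x_1^* *)
definition word_coef :: "real \<Rightarrow> gen list \<Rightarrow> real" where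
  "word_coef q w = (\<Prod>x\<leftarrow>w. (- q) powi gen_idx x)"

definition fa_star :: "real \<Rightarrow> fa \<Rightarrow> fa" where
  "fa_star q f = (\<lambda>v. let w = rev (map gen_swap v) in cnj (f w) * complex_of_real (word_coef q w))"

definition podles_rels :: "real \<Rightarrow> fa set" where
  "podles_rels q =
   { (\<lambda>w. fa_word [Z0,Z0] w - of_real q * fa_word [Zp,Zm] w - of_real (inverse q) * fa_word [Zm,Zp] w
          - fa_word [] w),
     (\<lambda>w. of_real (1 - q\<^sup>2) * fa_word [Z0,Z0] w + of_real q * fa_word [Zm,Zp] w
          - of_real q * fa_word [Zp,Zm] w),
     (\<lambda>w. fa_word [Zm,Z0] w - of_real (q\<^sup>2) * fa_word [Z0,Zm] w),
     (\<lambda>w. fa_word [Z0,Zp] w - of_real (q\<^sup>2) * fa_word [Zp,Z0] w) }"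

inductive_set podles_ideal :: "real \<Rightarrow> fa set" for q :: real where
  rel: "r \<in> podles_rels q \<Longrightarrow> r \<in> podles_ideal q"
| zero: "fa_zero \<in> podles_ideal q"
| add: "f \<in> podles_ideal q \<Longrightarrow> g \<in> podles_ideal q \<Longrightarrow> fa_add f g \<in> podles_ideal q"
| mult: "f \<in> podles_ideal q \<Longrightarrow> fa_fin a \<Longrightarrow> fa_fin b \<Longrightarrow>
           fa_mult (fa_mult a f) b \<in> podles_ideal q"

definition pod_eq :: "real \<Rightarrow> fa \<Rightarrow> fa \<Rightarrow> bool" where
  "pod_eq q f g \<longleftrightarrow> fa_diff f g \<in> podles_ideal q"

(* Index (b,i): b = False is the first block row/column, b = True the second; i the position.
   A 2n x 2n matrix [[A,B],[C,D]] has entries at indices with i < n.  Elements of the colimit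
   U^\<epsilon>(A) = colim_n U^\<epsilon>_n(A) (stabilisation M \<mapsto> [[A\<oplus>1, B\<oplus>0],[C\<oplus>0, D\<oplus>1]])
   are represented by infinite matrices that agree with the identity outside some finite block. *)
type_synonym idx = "bool \<times> nat"
type_synonym mat = "idx \<Rightarrow> idx \<Rightarrow> fa"

definition mat_id :: mat where
  "mat_id = (\<lambda>i j. if i = j then fa_one else fa_zero)"

definition finitary :: "mat \<Rightarrow> bool" where
  "finitary M \<longleftrightarrow> (\<forall>i j. fa_fin (M i j)) \<and>
     (\<exists>n. \<forall>i j. (snd i \<ge> n \<or> snd j \<ge> n) \<longrightarrow> M i j = mat_id i j)"

definition mat_mult :: "mat \<Rightarrow> mat \<Rightarrow> mat" where
  "mat_mult M N = (\<lambda>i j w. \<Sum>k\<in>{k. M i k \<noteq> fa_zero \<and> N k j \<noteq> fa_zero}. fa_mult (M i k) (N k j) w)"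

(* M^\<star> = [[D^\<dagger>, \<epsilon> B^\<dagger>],[\<epsilon> C^\<dagger>, A^\<dagger>]] *)
definition mat_star :: "real \<Rightarrow> complex \<Rightarrow> mat \<Rightarrow> mat" where
  "mat_star q eps M = (\<lambda>(b,i) (c,j).
     fa_smult (if b = c then 1 else eps) (fa_star q (M (\<not> c, j) (\<not> b, i))))"

definition mat_pod_eq :: "real \<Rightarrow> mat \<Rightarrow> mat \<Rightarrow> bool" where
  "mat_pod_eq q M N \<longleftrightarrow> (\<forall>i j. pod_eq q (M i j) (N i j))"

definition U_reps :: "real \<Rightarrow> complex \<Rightarrow> mat set" where
  "U_reps q eps = {M. finitary M \<and>
      mat_pod_eq q (mat_mult (mat_star q eps M) M) mat_id \<and>
      mat_pod_eq q (mat_mult M (mat_star q eps M)) mat_id}"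

definition mat_cls :: "real \<Rightarrow> mat \<Rightarrow> mat set" where
  "mat_cls q M = {N. finitary N \<and> mat_pod_eq q N M}"

definition U_group :: "real \<Rightarrow> complex \<Rightarrow> mat set monoid" where
  "U_group q eps = \<lparr> partial_object.carrier = mat_cls q ` U_reps q eps,
     monoid.mult = (\<lambda>S T. mat_cls q (mat_mult (SOME M. M \<in> S) (SOME N. N \<in> T))),
     monoid.one = mat_cls q mat_id \<rparr>"

(* KU^\<epsilon>_1 = U^\<epsilon>/[U^\<epsilon>,U^\<epsilon>]; it is non-trivial iff the commutator subgroup is proper *)
definition KU1_nontrivial :: "real \<Rightarrow> complex \<Rightarrow> bool" where
  "KU1_nontrivial q eps \<longleftrightarrow>
     derived (U_group q eps) (carrier (U_group q eps)) \<noteq> carrier (U_group q eps)"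

end

theory Submission
  imports Defs "Jordan_Normal_Form.Determinant"
begin

text \<open>The assignment \<open>z\<^sub>1 \<mapsto> 1\<close>, \<open>z\<^sub>0 \<mapsto> 0\<close>, \<open>z\<^sub>-\<^sub>1 \<mapsto> -q/(1+q\<^sup>2)\<close> respects the four
  defining relations, so it extends to a character \<open>\<chi>\<close> of \<open>O(S\<^sup>2\<^sub>q)\<close>. Applying \<open>\<chi>\<close> entrywise to a matrix and taking the determinant is
  multiplicative and insensitive to stabilisation, hence defines a homomorphism from
  \<open>U\<^sup>+(O(S\<^sup>2\<^sub>q))\<close> to the commutative group \<open>\<complex>\<^sup>\<times>\<close>, which vanishes on commutators. The unitary
  diagonal matrix with entries \<open>i\<close> in the two positions of index 0 and 1 elsewhere has
  determinant \<open>i\<^sup>2 = -1\<close>, so it is not a product of commutators.\<close>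

definition fa_sum :: "'k set \<Rightarrow> ('k \<Rightarrow> fa) \<Rightarrow> fa" where
  "fa_sum K F = (\<lambda>w. \<Sum>k\<in>K. F k w)"

lemma fa_sum_insert:
  "finite K \<Longrightarrow> k \<notin> K \<Longrightarrow> fa_sum (insert k K) F = fa_add (F k) (fa_sum K F)"
  by (auto simp: fa_sum_def fa_add_def)

lemma fa_sum_cong: "(\<And>k. k \<in> K \<Longrightarrow> F k = G k) \<Longrightarrow> fa_sum K F = fa_sum K G"
  by (simp add: fa_sum_def)

lemma fa_sum_empty[simp]: "fa_sum {} F = fa_zero"
  by (simp add: fa_sum_def fa_zero_def)

lemma fa_mult_assoc: "fa_mult (fa_mult f g) h = fa_mult f (fa_mult g h)"
proof
  fix w :: "gen list"
  let ?n = "length w"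
  define G where "G = (\<lambda>j k. f (take j w) * g (take k (drop j w)) * h (drop (j + k) w))"
  have L: "fa_mult (fa_mult f g) h w = (\<Sum>i\<le>?n. \<Sum>j\<le>i. G j (i - j))"
    unfolding fa_mult_def G_def
    by (rule sum.cong[OF refl]) (simp add: sum_distrib_right min_absorb1 take_drop)
  have R: "fa_mult f (fa_mult g h) w = (\<Sum>j\<le>?n. \<Sum>k\<le>?n - j. G j k)"
    unfolding fa_mult_def G_def
    by (rule sum.cong[OF refl]) (simp add: sum_distrib_left mult.assoc add.commute)
  have "{(j, k). j + k \<le> ?n} = Sigma {..?n} (\<lambda>j. {..?n - j})" by auto
  then have "(\<Sum>j\<le>?n. \<Sum>k\<le>?n - j. G j k) = (\<Sum>(j, k)\<in>{(j, k). j + k \<le> ?n}. G j k)"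
    by (simp add: sum.Sigma)
  also have "\<dots> = (\<Sum>i\<le>?n. \<Sum>j\<le>i. G j (i - j))"
    by (rule sum.triangle_reindex_eq)
  finally show "fa_mult (fa_mult f g) h w = fa_mult f (fa_mult g h) w" using L R by simp
qed

lemma fa_mult_one_left[simp]: "fa_mult fa_one f = f"
proof
  fix w
  have "fa_mult fa_one f w = (\<Sum>i\<le>length w. if i = 0 then f w else 0)"
    unfolding fa_mult_def fa_one_def fa_word_def by (rule sum.cong) auto
  then show "fa_mult fa_one f w = f w" by simp
qed

lemma fa_mult_one_right[simp]: "fa_mult f fa_one = f"
proof
  fix w
  have "fa_mult f fa_one w = (\<Sum>i\<le>length w. if i = length w then f w else 0)"
    unfolding fa_mult_def fa_one_def fa_word_def by (rule sum.cong) auto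
  then show "fa_mult f fa_one w = f w" by simp
qed

lemma fa_mult_diff_left: "fa_mult (fa_diff f g) h = fa_diff (fa_mult f h) (fa_mult g h)"
  by (simp add: fa_mult_def fa_diff_def left_diff_distrib sum_subtractf)

lemma fa_mult_diff_right: "fa_mult h (fa_diff f g) = fa_diff (fa_mult h f) (fa_mult h g)"
  by (simp add: fa_mult_def fa_diff_def right_diff_distrib sum_subtractf)

lemma fa_mult_smult_left: "fa_mult (fa_smult c f) h = fa_smult c (fa_mult f h)"
  by (simp add: fa_mult_def fa_smult_def sum_distrib_left mult.assoc)

lemma fa_mult_smult_right: "fa_mult h (fa_smult c f) = fa_smult c (fa_mult h f)"
  by (simp add: fa_mult_def fa_smult_def sum_distrib_left mult.left_commute)

lemma fa_mult_sum_left: "finite K \<Longrightarrow> fa_mult (fa_sum K F) h = fa_sum K (\<lambda>k. fa_mult (F k) h)"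
  unfolding fa_mult_def fa_sum_def by (rule ext) (simp add: sum_distrib_right sum.swap[of _ K])

lemma fa_mult_sum_right: "finite K \<Longrightarrow> fa_mult h (fa_sum K F) = fa_sum K (\<lambda>k. fa_mult h (F k))"
  unfolding fa_mult_def fa_sum_def by (rule ext) (simp add: sum_distrib_left sum.swap[of _ K])

lemma fa_word_mult: "fa_mult (fa_word u) (fa_word v) = fa_word (u @ v)"
proof
  fix w
  have "fa_mult (fa_word u) (fa_word v) w =
      (\<Sum>i\<le>length w. if i = length u \<and> w = u @ v then 1 else 0)"
    unfolding fa_mult_def fa_word_def
  proof (rule sum.cong[OF refl])
    fix i assume "i \<in> {..length w}"
    then have "(take i w = u \<and> drop i w = v) \<longleftrightarrow> (i = length u \<and> w = u @ v)"
      by (auto simp: min_def)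
    then show "(if take i w = u then 1 else 0) * (if drop i w = v then 1 else 0) =
        (if i = length u \<and> w = u @ v then 1 else (0::complex))"
      by auto
  qed
  also have "\<dots> = fa_word (u @ v) w"
    by (auto simp: fa_word_def)
  finally show "fa_mult (fa_word u) (fa_word v) w = fa_word (u @ v) w" .
qed

lemma fa_fin_zero[simp]: "fa_fin fa_zero"
  by (simp add: fa_fin_def fa_zero_def)

lemma fa_fin_word[simp]: "fa_fin (fa_word u)"
  by (simp add: fa_fin_def fa_word_def)

lemma fa_fin_one[simp]: "fa_fin fa_one"
  by (simp add: fa_one_def)

lemma fa_fin_add[simp]: "fa_fin f \<Longrightarrow> fa_fin g \<Longrightarrow> fa_fin (fa_add f g)"
  unfolding fa_fin_def fa_add_def
  by (rule finite_subset[of _ "{w. f w \<noteq> 0} \<union> {w. g w \<noteq> 0}"]) auto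

lemma fa_fin_smult[simp]: "fa_fin f \<Longrightarrow> fa_fin (fa_smult c f)"
  unfolding fa_fin_def fa_smult_def by (rule finite_subset[of _ "{w. f w \<noteq> 0}"]) auto

lemma fa_fin_sum[simp]: "finite K \<Longrightarrow> (\<And>k. k \<in> K \<Longrightarrow> fa_fin (F k)) \<Longrightarrow> fa_fin (fa_sum K F)"
  unfolding fa_fin_def fa_sum_def
  by (rule finite_subset[of _ "\<Union>k\<in>K. {w. F k w \<noteq> 0}"]) (auto intro: sum.neutral)

lemma fa_expand: "fa_fin f \<Longrightarrow> f = fa_sum {w. f w \<noteq> 0} (\<lambda>u. fa_smult (f u) (fa_word u))"
  unfolding fa_sum_def fa_smult_def fa_word_def fa_fin_def
  by (auto intro!: ext simp: if_distrib cong: if_cong)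

lemma fa_mult_expand:
  assumes f: "fa_fin f" and g: "fa_fin g"
  shows "fa_mult f g = fa_sum {w. f w \<noteq> 0} (\<lambda>u. fa_smult (f u)
           (fa_sum {w. g w \<noteq> 0} (\<lambda>v. fa_smult (g v) (fa_word (u @ v)))))"
proof -
  have "fa_mult f g = fa_sum {w. f w \<noteq> 0} (\<lambda>u. fa_smult (f u) (fa_mult (fa_word u) g))"
    by (subst fa_expand[OF f]) (use f in \<open>simp add: fa_mult_sum_left fa_fin_def fa_mult_smult_left\<close>)
  also have "\<dots> = fa_sum {w. f w \<noteq> 0} (\<lambda>u. fa_smult (f u)
           (fa_sum {w. g w \<noteq> 0} (\<lambda>v. fa_smult (g v) (fa_word (u @ v)))))"
    by (subst fa_expand[OF g])
      (use g in \<open>simp add: fa_mult_sum_right fa_fin_def fa_mult_smult_right fa_word_mult\<close>)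
  finally show ?thesis .
qed

lemma fa_fin_mult[simp]:
  assumes "fa_fin f" "fa_fin g"
  shows "fa_fin (fa_mult f g)"
  using assms unfolding fa_mult_expand[OF assms]
  by (intro fa_fin_sum fa_fin_smult fa_fin_word) (auto simp: fa_fin_def)

lemma podles_rels_fin: "r \<in> podles_rels q \<Longrightarrow> fa_fin r"
  unfolding podles_rels_def fa_fin_def
  by (elim insertE emptyE;
      rule finite_subset[of _ "{[Z0,Z0], [Zp,Zm], [Zm,Zp], [], [Zm,Z0], [Z0,Zm], [Z0,Zp], [Zp,Z0]}"])
     (auto simp: fa_word_def)

lemma podles_ideal_fin: "f \<in> podles_ideal q \<Longrightarrow> fa_fin f"
  by (induction rule: podles_ideal.induct) (auto simp: podles_rels_fin)

lemma podles_ideal_mult_left: "f \<in> podles_ideal q \<Longrightarrow> fa_fin a \<Longrightarrow> fa_mult a f \<in> podles_ideal q"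
  using podles_ideal.mult[of f q a fa_one] by simp

lemma podles_ideal_mult_right: "f \<in> podles_ideal q \<Longrightarrow> fa_fin b \<Longrightarrow> fa_mult f b \<in> podles_ideal q"
  using podles_ideal.mult[of f q fa_one b] by simp

lemma podles_ideal_smult: "f \<in> podles_ideal q \<Longrightarrow> fa_smult c f \<in> podles_ideal q"
  using podles_ideal_mult_left[of f q "fa_smult c fa_one"] by (simp add: fa_mult_smult_left)

lemma podles_ideal_sum:
  "finite K \<Longrightarrow> (\<And>k. k \<in> K \<Longrightarrow> F k \<in> podles_ideal q) \<Longrightarrow> fa_sum K F \<in> podles_ideal q"
  by (induction K rule: finite_induct) (auto simp: fa_sum_insert podles_ideal.zero podles_ideal.add)

lemma pod_eq_refl[simp]: "pod_eq q f f"
proof -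
  have "fa_diff f f = fa_zero" by (simp add: fa_diff_def fa_zero_def)
  then show ?thesis by (simp add: pod_eq_def podles_ideal.zero)
qed

lemma pod_eq_sym: "pod_eq q f g \<Longrightarrow> pod_eq q g f"
  using podles_ideal_smult[of "fa_diff f g" q "-1"]
  by (simp add: pod_eq_def fa_smult_def fa_diff_def)

lemma pod_eq_trans: "pod_eq q f g \<Longrightarrow> pod_eq q g h \<Longrightarrow> pod_eq q f h"
  using podles_ideal.add[of "fa_diff f g" q "fa_diff g h"]
  by (simp add: pod_eq_def fa_add_def fa_diff_def)

lemma pod_eq_mult:
  assumes "fa_fin f'" "fa_fin g" "pod_eq q f f'" "pod_eq q g g'"
  shows "pod_eq q (fa_mult f g) (fa_mult f' g')"
proof -
  have "fa_add (fa_mult (fa_diff f f') g) (fa_mult f' (fa_diff g g')) \<in> podles_ideal q"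
    using assms unfolding pod_eq_def
    by (intro podles_ideal.add podles_ideal_mult_left podles_ideal_mult_right)
  then show ?thesis
    unfolding fa_mult_diff_left fa_mult_diff_right pod_eq_def by (simp add: fa_add_def fa_diff_def)
qed

lemma pod_eq_sum:
  assumes "finite K" "\<And>k. k \<in> K \<Longrightarrow> pod_eq q (F k) (G k)"
  shows "pod_eq q (fa_sum K F) (fa_sum K G)"
proof -
  have "fa_sum K (\<lambda>k. fa_diff (F k) (G k)) \<in> podles_ideal q"
    using assms unfolding pod_eq_def by (intro podles_ideal_sum) auto
  then show ?thesis by (simp add: pod_eq_def fa_sum_def fa_diff_def sum_subtractf)
qed

section \<open>A character of the Podles sphere\<close>

fun chi_gen :: "real \<Rightarrow> gen \<Rightarrow> complex" where
  "chi_gen q Zp = 1" | "chi_gen q Z0 = 0" | "chi_gen q Zm = of_real (- q / (1 + q\<^sup>2))"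

definition chi_word :: "real \<Rightarrow> gen list \<Rightarrow> complex" where
  "chi_word q w = prod_list (map (chi_gen q) w)"

definition chi :: "real \<Rightarrow> fa \<Rightarrow> complex" where
  "chi q f = (\<Sum>w\<in>{w. f w \<noteq> 0}. f w * chi_word q w)"

lemma chi_eq_sum: "finite A \<Longrightarrow> {w. f w \<noteq> 0} \<subseteq> A \<Longrightarrow> chi q f = (\<Sum>w\<in>A. f w * chi_word q w)"
  unfolding chi_def by (rule sum.mono_neutral_left) auto

lemma chi_zero[simp]: "chi q fa_zero = 0"
  by (simp add: chi_def fa_zero_def)

lemma chi_add:
  assumes "fa_fin f" "fa_fin g"
  shows "chi q (fa_add f g) = chi q f + chi q g"
proof -
  let ?A = "{w. f w \<noteq> 0} \<union> {w. g w \<noteq> 0}"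
  have A: "finite ?A" using assms by (simp add: fa_fin_def)
  have "chi q (fa_add f g) = (\<Sum>w\<in>?A. fa_add f g w * chi_word q w)"
    by (rule chi_eq_sum[OF A]) (auto simp: fa_add_def)
  then show ?thesis
    using chi_eq_sum[OF A, of f q] chi_eq_sum[OF A, of g q] by (simp add: fa_add_def distrib_right sum.distrib)
qed

lemma chi_diff:
  assumes "fa_fin f" "fa_fin g"
  shows "chi q (fa_diff f g) = chi q f - chi q g"
proof -
  let ?A = "{w. f w \<noteq> 0} \<union> {w. g w \<noteq> 0}"
  have A: "finite ?A" using assms by (simp add: fa_fin_def)
  have "chi q (fa_diff f g) = (\<Sum>w\<in>?A. fa_diff f g w * chi_word q w)"
    by (rule chi_eq_sum[OF A]) (auto simp: fa_diff_def)
  then show ?thesis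
    using chi_eq_sum[OF A, of f q] chi_eq_sum[OF A, of g q] by (simp add: fa_diff_def left_diff_distrib sum_subtractf)
qed

lemma chi_smult: "fa_fin f \<Longrightarrow> chi q (fa_smult c f) = c * chi q f"
  using chi_eq_sum[of "{w. f w \<noteq> 0}" "fa_smult c f"]
  by (auto simp: fa_fin_def fa_smult_def sum_distrib_left mult.assoc chi_def)

lemma chi_sum:
  "finite K \<Longrightarrow> (\<And>k. k \<in> K \<Longrightarrow> fa_fin (F k)) \<Longrightarrow> chi q (fa_sum K F) = (\<Sum>k\<in>K. chi q (F k))"
  by (induction K rule: finite_induct) (auto simp: fa_sum_insert chi_add)

lemma chi_fa_word[simp]: "chi q (fa_word u) = chi_word q u"
  using chi_eq_sum[of "{u}" "fa_word u"] by (simp add: fa_word_def)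

lemma chi_fa_one[simp]: "chi q fa_one = 1"
  by (simp add: fa_one_def chi_word_def)

lemma chi_mult:
  assumes f: "fa_fin f" and g: "fa_fin g"
  shows "chi q (fa_mult f g) = chi q f * chi q g"
proof -
  have fin: "finite {w. f w \<noteq> 0}" "finite {w. g w \<noteq> 0}"
    using f g by (auto simp: fa_fin_def)
  have "chi q (fa_mult f g) =
      (\<Sum>u\<in>{w. f w \<noteq> 0}. f u * (\<Sum>v\<in>{w. g w \<noteq> 0}. g v * chi_word q (u @ v)))"
    unfolding fa_mult_expand[OF f g] using fin by (simp add: chi_sum chi_smult)
  also have "\<dots> = (\<Sum>u\<in>{w. f w \<noteq> 0}. f u * chi_word q u) * (\<Sum>v\<in>{w. g w \<noteq> 0}. g v * chi_word q v)"
    unfolding sum_product by (simp add: chi_word_def sum_distrib_left mult_ac)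
  finally show ?thesis by (simp add: chi_def)
qed

lemma chi_podles_rels:
  assumes q: "q \<noteq> 0" and r: "r \<in> podles_rels q"
  shows "chi q r = 0"
proof -
  have "1 + q\<^sup>2 \<noteq> 0" by (smt (verit) zero_le_power2)
  then have "q * q / (1 + q\<^sup>2) + inverse q * q / (1 + q\<^sup>2) - 1 = 0"
    using q by (simp add: field_simps power2_eq_square)
  then have first_rel: "complex_of_real (q * q / (1 + q\<^sup>2) + inverse q * q / (1 + q\<^sup>2) - 1) = 0"
    by simp
  from r show ?thesis
    unfolding podles_rels_def
    by (elim insertE emptyE; subst chi_eq_sum[of
          "{[Z0,Z0], [Zp,Zm], [Zm,Zp], [], [Zm,Z0], [Z0,Zm], [Z0,Zp], [Zp,Z0]}"])
       (use first_rel in \<open>auto simp: fa_word_def chi_word_def add_diff_eq\<close>)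
qed

lemma chi_podles_ideal:
  assumes "q \<noteq> 0" and "f \<in> podles_ideal q"
  shows "chi q f = 0"
  using assms(2)
  by induction (auto simp: chi_podles_rels[OF assms(1)] chi_add chi_mult podles_ideal_fin)

lemma chi_pod_eq: "q \<noteq> 0 \<Longrightarrow> fa_fin f \<Longrightarrow> fa_fin g \<Longrightarrow> pod_eq q f g \<Longrightarrow> chi q f = chi q g"
  unfolding pod_eq_def using chi_podles_ideal chi_diff by fastforce

definition id_beyond :: "Defs.mat \<Rightarrow> nat \<Rightarrow> bool" where
  "id_beyond M n \<longleftrightarrow> (\<forall>i j. (snd i \<ge> n \<or> snd j \<ge> n) \<longrightarrow> M i j = mat_id i j)"

definition idx_below :: "nat \<Rightarrow> idx set" where
  "idx_below m = {k. snd k < m}"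

lemma finite_idx_below[simp]: "finite (idx_below m)"
proof -
  have "idx_below m = UNIV \<times> {..<m}" by (auto simp: idx_below_def)
  then show ?thesis by simp
qed

lemma id_beyond_mono: "id_beyond M n \<Longrightarrow> n \<le> m \<Longrightarrow> id_beyond M m"
  unfolding id_beyond_def by auto

lemma finitary_iff: "finitary M \<longleftrightarrow> (\<forall>i j. fa_fin (M i j)) \<and> (\<exists>n. id_beyond M n)"
  unfolding finitary_def id_beyond_def by auto

lemma finitary_fa_fin: "finitary M \<Longrightarrow> fa_fin (M i j)"
  unfolding finitary_def by blast

lemma finitary_common_bound:
  "finitary M \<Longrightarrow> finitary N \<Longrightarrow> \<exists>n. id_beyond M n \<and> id_beyond N n"
  unfolding finitary_iff by (metis id_beyond_mono max.cobounded1 max.cobounded2)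

lemma finitary_mat_id[simp]: "finitary mat_id"
  unfolding finitary_iff id_beyond_def by (auto simp: mat_id_def)

lemma mat_mult_eq_fa_sum:
  assumes "id_beyond M n" "n \<le> m" "snd i < m"
  shows "mat_mult M N i j = fa_sum (idx_below m) (\<lambda>k. fa_mult (M i k) (N k j))"
proof -
  have "M i k = fa_zero" if "k \<notin> idx_below m" for k
  proof -
    have "snd k \<ge> n" "k \<noteq> i" using assms that by (auto simp: idx_below_def)
    then have "M i k = mat_id i k" using assms(1) unfolding id_beyond_def by blast
    with \<open>k \<noteq> i\<close> show ?thesis by (simp add: mat_id_def)
  qed
  then have "{k. M i k \<noteq> fa_zero \<and> N k j \<noteq> fa_zero} \<subseteq> idx_below m" by blast
  then show ?thesis
    unfolding mat_mult_def fa_sum_def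
    by (intro ext sum.mono_neutral_left) (auto simp: fa_zero_def fa_mult_def)
qed

lemma mat_mult_single_left:
  assumes "\<And>k. k \<noteq> i \<Longrightarrow> M i k = fa_zero"
  shows "mat_mult M N i j = fa_mult (M i i) (N i j)"
proof (rule ext)
  fix w
  have "{k. M i k \<noteq> fa_zero \<and> N k j \<noteq> fa_zero} \<subseteq> {i}" using assms by auto
  then have "mat_mult M N i j w = (\<Sum>k\<in>{i}. fa_mult (M i k) (N k j) w)"
    unfolding mat_mult_def by (intro sum.mono_neutral_left) (auto simp: fa_zero_def fa_mult_def)
  then show "mat_mult M N i j w = fa_mult (M i i) (N i j) w" by simp
qed

lemma mat_mult_single_right:
  assumes "\<And>k. k \<noteq> j \<Longrightarrow> N k j = fa_zero"
  shows "mat_mult M N i j = fa_mult (M i j) (N j j)"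
proof (rule ext)
  fix w
  have "{k. M i k \<noteq> fa_zero \<and> N k j \<noteq> fa_zero} \<subseteq> {j}" using assms by auto
  then have "mat_mult M N i j w = (\<Sum>k\<in>{j}. fa_mult (M i k) (N k j) w)"
    unfolding mat_mult_def by (intro sum.mono_neutral_left) (auto simp: fa_zero_def fa_mult_def)
  then show "mat_mult M N i j w = fa_mult (M i j) (N j j) w" by simp
qed

lemma mat_mult_id_row: "(\<And>k. M i k = mat_id i k) \<Longrightarrow> mat_mult M N i j = N i j"
  by (subst mat_mult_single_left) (auto simp: mat_id_def)

lemma mat_mult_id_col: "(\<And>k. N k j = mat_id k j) \<Longrightarrow> mat_mult M N i j = M i j"
  by (subst mat_mult_single_right) (auto simp: mat_id_def)

lemma mat_mult_id_left[simp]: "mat_mult mat_id N = N"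
  by (intro ext mat_mult_id_row) simp

lemma id_beyond_mult:
  assumes M: "id_beyond M n" and N: "id_beyond N n"
  shows "id_beyond (mat_mult M N) n"
  unfolding id_beyond_def
proof (intro allI impI)
  fix i j :: idx
  assume "n \<le> snd i \<or> n \<le> snd j"
  then show "mat_mult M N i j = mat_id i j"
  proof
    assume i: "n \<le> snd i"
    then have "mat_mult M N i j = N i j"
      using M unfolding id_beyond_def by (intro mat_mult_id_row) blast
    also have "\<dots> = mat_id i j" using N i unfolding id_beyond_def by blast
    finally show ?thesis .
  next
    assume j: "n \<le> snd j"
    then have "mat_mult M N i j = M i j"
      using N unfolding id_beyond_def by (intro mat_mult_id_col) blast
    also have "\<dots> = mat_id i j" using M j unfolding id_beyond_def by blast
    finally show ?thesis .
  qed
qed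

lemma finitary_mult:
  assumes M: "finitary M" and N: "finitary N"
  shows "finitary (mat_mult M N)"
proof -
  obtain n where n: "id_beyond M n" "id_beyond N n"
    using finitary_common_bound[OF M N] by blast
  have "fa_fin (mat_mult M N i j)" for i j
  proof -
    have "mat_mult M N i j = fa_sum (idx_below (max n (Suc (snd i)))) (\<lambda>k. fa_mult (M i k) (N k j))"
      using n by (intro mat_mult_eq_fa_sum) auto
    then show ?thesis using M N by (simp add: finitary_fa_fin)
  qed
  then show ?thesis
    unfolding finitary_iff using id_beyond_mult[OF n] by blast
qed

lemma mat_mult_assoc:
  assumes M: "finitary M" and N: "finitary N" and P: "finitary P"
  shows "mat_mult (mat_mult M N) P = mat_mult M (mat_mult N P)"
proof (intro ext)
  fix i j :: idx and w :: "gen list"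
  obtain n1 where n1: "id_beyond M n1" "id_beyond N n1" using finitary_common_bound[OF M N] by blast
  obtain n2 where n2: "id_beyond N n2" "id_beyond P n2" using finitary_common_bound[OF N P] by blast
  define m where "m = max (max n1 n2) (Suc (snd i))"
  define B where "B = idx_below m"
  have b: "id_beyond M m" "id_beyond N m" "id_beyond P m"
    using n1 n2 id_beyond_mono unfolding m_def by (meson max.cobounded1 max.cobounded2 order_trans)+
  have i: "snd i < m" by (simp add: m_def)
  have L: "mat_mult M N i k = fa_sum B (\<lambda>l. fa_mult (M i l) (N l k))" for k
    unfolding B_def using b i by (intro mat_mult_eq_fa_sum) auto
  have R: "mat_mult N P l j = fa_sum B (\<lambda>k. fa_mult (N l k) (P k j))" if "l \<in> B" for l
    using b that unfolding B_def by (intro mat_mult_eq_fa_sum) (auto simp: idx_below_def)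
  have "mat_mult (mat_mult M N) P i j = fa_sum B (\<lambda>k. fa_mult (mat_mult M N i k) (P k j))"
    unfolding B_def using b i id_beyond_mult by (intro mat_mult_eq_fa_sum) auto
  also have "\<dots> = fa_sum B (\<lambda>l. fa_sum B (\<lambda>k. fa_mult (M i l) (fa_mult (N l k) (P k j))))"
    unfolding L B_def fa_mult_sum_left[OF finite_idx_below] fa_mult_assoc
    by (unfold fa_sum_def) (rule ext, rule sum.swap)
  also have "\<dots> = fa_sum B (\<lambda>l. fa_mult (M i l) (fa_sum B (\<lambda>k. fa_mult (N l k) (P k j))))"
    by (simp only: B_def fa_mult_sum_right[OF finite_idx_below])
  also have "\<dots> = fa_sum B (\<lambda>l. fa_mult (M i l) (mat_mult N P l j))"
    by (rule fa_sum_cong) (simp add: R)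
  also have "\<dots> = mat_mult M (mat_mult N P) i j"
    unfolding B_def using b i by (intro mat_mult_eq_fa_sum[symmetric]) auto
  finally show "mat_mult (mat_mult M N) P i j w = mat_mult M (mat_mult N P) i j w" by simp
qed

lemma mat_pod_eq_refl[simp]: "mat_pod_eq q M M"
  by (simp add: mat_pod_eq_def)

lemma mat_pod_eq_sym: "mat_pod_eq q M N \<Longrightarrow> mat_pod_eq q N M"
  by (simp add: mat_pod_eq_def pod_eq_sym)

lemma mat_pod_eq_trans: "mat_pod_eq q M N \<Longrightarrow> mat_pod_eq q N P \<Longrightarrow> mat_pod_eq q M P"
  unfolding mat_pod_eq_def by (meson pod_eq_trans)

lemma mat_pod_eq_mult:
  assumes M: "finitary M" "finitary M'" and N: "finitary N" "finitary N'"
    and "mat_pod_eq q M M'" "mat_pod_eq q N N'"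
  shows "mat_pod_eq q (mat_mult M N) (mat_mult M' N')"
  unfolding mat_pod_eq_def
proof (intro allI)
  fix i j :: idx
  obtain n1 where n1: "id_beyond M n1" "id_beyond N n1" using finitary_common_bound[OF M(1) N(1)] by blast
  obtain n2 where n2: "id_beyond M' n2" "id_beyond N' n2" using finitary_common_bound[OF M(2) N(2)] by blast
  define m where "m = max (max n1 n2) (Suc (snd i))"
  have eqM: "\<And>a b. pod_eq q (M a b) (M' a b)" and eqN: "\<And>a b. pod_eq q (N a b) (N' a b)"
    using assms(5,6) unfolding mat_pod_eq_def by blast+
  have "mat_mult M N i j = fa_sum (idx_below m) (\<lambda>k. fa_mult (M i k) (N k j))"
    using n1 unfolding m_def by (intro mat_mult_eq_fa_sum) auto
  moreover have "mat_mult M' N' i j = fa_sum (idx_below m) (\<lambda>k. fa_mult (M' i k) (N' k j))"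
    using n2 unfolding m_def by (intro mat_mult_eq_fa_sum) auto
  moreover have "pod_eq q (fa_sum (idx_below m) (\<lambda>k. fa_mult (M i k) (N k j)))
      (fa_sum (idx_below m) (\<lambda>k. fa_mult (M' i k) (N' k j)))"
    using M N by (intro pod_eq_sum pod_eq_mult finite_idx_below eqM eqN finitary_fa_fin)
  ultimately show "pod_eq q (mat_mult M N i j) (mat_mult M' N' i j)" by simp
qed

definition swap_rev :: "gen list \<Rightarrow> gen list" where
  "swap_rev v = rev (map gen_swap v)"

lemma gen_swap_swap[simp]: "gen_swap (gen_swap x) = x"
  by (cases x) auto

lemma swap_rev_swap_rev[simp]: "swap_rev (swap_rev v) = v"
  by (simp add: swap_rev_def rev_map comp_def)

lemma swap_rev_take: "swap_rev (take i v) = drop (length v - i) (swap_rev v)"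
  unfolding swap_rev_def take_map[symmetric] rev_take by simp

lemma swap_rev_drop: "swap_rev (drop i v) = take (length v - i) (swap_rev v)"
  unfolding swap_rev_def drop_map[symmetric] rev_drop by simp

lemma word_coef_append: "word_coef q (u @ v) = word_coef q u * word_coef q v"
  by (simp add: word_coef_def)

lemma word_coef_swap_rev: "q \<noteq> 0 \<Longrightarrow> word_coef q v * word_coef q (swap_rev v) = 1"
proof (induction v)
  case Nil
  then show ?case by (simp add: word_coef_def swap_rev_def)
next
  case (Cons x v)
  have "(- q) powi gen_idx x * (- q) powi gen_idx (gen_swap x) = 1"
    using Cons.prems by (cases x) (auto simp: power_int_minus field_simps)
  moreover have "word_coef q (x # v) * word_coef q (swap_rev (x # v)) =
      ((- q) powi gen_idx x * (- q) powi gen_idx (gen_swap x)) * (word_coef q v * word_coef q (swap_rev v))"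
    by (simp add: swap_rev_def word_coef_def mult_ac)
  ultimately show ?case using Cons by simp
qed

lemma fa_star_apply: "fa_star q f v = cnj (f (swap_rev v)) * of_real (word_coef q (swap_rev v))"
  by (simp add: fa_star_def swap_rev_def Let_def)

lemma fa_star_star:
  assumes "q \<noteq> 0"
  shows "fa_star q (fa_star q f) = f"
proof
  fix v
  have "fa_star q (fa_star q f) v = f v * of_real (word_coef q v * word_coef q (swap_rev v))"
    by (simp add: fa_star_apply mult_ac)
  then show "fa_star q (fa_star q f) v = f v" using word_coef_swap_rev[OF assms] by simp
qed

lemma fa_star_sum: "fa_star q (fa_sum K F) = fa_sum K (\<lambda>k. fa_star q (F k))"
  by (rule ext) (simp add: fa_star_apply fa_sum_def sum_distrib_right)

lemma fa_star_zero[simp]: "fa_star q fa_zero = fa_zero"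
  by (simp add: fa_star_def fa_zero_def)

lemma fa_star_one[simp]: "fa_star q fa_one = fa_one"
  by (rule ext) (simp add: fa_star_apply fa_one_def fa_word_def word_coef_def swap_rev_def)

lemma fa_star_scalar: "fa_star q (fa_smult c fa_one) = fa_smult (cnj c) fa_one"
  by (rule ext) (simp add: fa_star_apply fa_smult_def fa_one_def fa_word_def word_coef_def swap_rev_def)

lemma fa_fin_star: "fa_fin f \<Longrightarrow> fa_fin (fa_star q f)"
  unfolding fa_fin_def
proof -
  assume "finite {w. f w \<noteq> 0}"
  moreover have "{v. fa_star q f v \<noteq> 0} \<subseteq> swap_rev ` {w. f w \<noteq> 0}"
  proof
    fix v assume "v \<in> {v. fa_star q f v \<noteq> 0}"
    then have "swap_rev v \<in> {w. f w \<noteq> 0}" by (auto simp: fa_star_apply)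
    then show "v \<in> swap_rev ` {w. f w \<noteq> 0}" by (metis image_eqI swap_rev_swap_rev)
  qed
  ultimately show "finite {v. fa_star q f v \<noteq> 0}" by (meson finite_imageI finite_subset)
qed

lemma fa_star_mult: "fa_star q (fa_mult f g) = fa_mult (fa_star q g) (fa_star q f)"
proof
  fix v
  let ?n = "length v" and ?w = "swap_rev v"
  define G where "G = (\<lambda>k. cnj (f (take k ?w) * g (drop k ?w)) * of_real (word_coef q ?w))"
  have "fa_mult (fa_star q g) (fa_star q f) v =
      (\<Sum>i\<in>{0..?n}. fa_star q g (take i v) * fa_star q f (drop i v))"
    by (simp add: fa_mult_def atLeast0AtMost)
  also have "\<dots> = (\<Sum>i\<in>{0..?n}. G (?n - i))"
  proof (rule sum.cong[OF refl])
    fix i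
    have "word_coef q ?w = word_coef q (take (?n - i) ?w) * word_coef q (drop (?n - i) ?w)"
      by (metis append_take_drop_id word_coef_append)
    then show "fa_star q g (take i v) * fa_star q f (drop i v) = G (?n - i)"
      unfolding fa_star_apply swap_rev_take swap_rev_drop G_def by (simp add: mult_ac)
  qed
  also have "\<dots> = (\<Sum>i\<in>{0..?n}. G i)"
    by (rule sum.atLeastAtMost_rev[of "\<lambda>i. G (?n - i)" 0 ?n, simplified])
  also have "\<dots> = fa_star q (fa_mult f g) v"
    by (simp add: fa_star_apply fa_mult_def G_def sum_distrib_right atLeast0AtMost swap_rev_def)
  finally show "fa_star q (fa_mult f g) v = fa_mult (fa_star q g) (fa_star q f) v" by simp
qed

abbreviation mstar :: "real \<Rightarrow> Defs.mat \<Rightarrow> Defs.mat" where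
  "mstar q M \<equiv> mat_star q 1 M"

lemma mstar_apply: "mstar q M x y = fa_star q (M (\<not> fst y, snd y) (\<not> fst x, snd x))"
  by (cases x; cases y) (simp add: mat_star_def fa_smult_def)

lemma mstar_id[simp]: "mstar q mat_id = mat_id"
  by (auto intro!: ext simp: mstar_apply mat_id_def prod_eq_iff)

lemma mstar_mstar: "q \<noteq> 0 \<Longrightarrow> mstar q (mstar q M) = M"
  by (intro ext) (simp add: mstar_apply fa_star_star)

lemma id_beyond_mstar:
  assumes M: "id_beyond M n"
  shows "id_beyond (mstar q M) n"
  unfolding id_beyond_def
proof (intro allI impI)
  fix x y :: idx
  assume "n \<le> snd x \<or> n \<le> snd y"
  then have "M (\<not> fst y, snd y) (\<not> fst x, snd x) = mat_id (\<not> fst y, snd y) (\<not> fst x, snd x)"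
    using M unfolding id_beyond_def by (metis snd_conv)
  then show "mstar q M x y = mat_id x y"
    by (auto simp: mstar_apply mat_id_def prod_eq_iff)
qed

lemma finitary_mstar: "finitary M \<Longrightarrow> finitary (mstar q M)"
  unfolding finitary_iff using id_beyond_mstar fa_fin_star by (metis mstar_apply)

lemma mstar_mult:
  assumes M: "finitary M" and N: "finitary N"
  shows "mstar q (mat_mult M N) = mat_mult (mstar q N) (mstar q M)"
proof (intro ext)
  fix x y :: idx and w :: "gen list"
  let ?x' = "(\<not> fst x, snd x)" and ?y' = "(\<not> fst y, snd y)"
  obtain n where n: "id_beyond M n" "id_beyond N n" using finitary_common_bound[OF M N] by blast
  define B where "B = idx_below (max n (Suc (max (snd x) (snd y))))"
  define h where "h = (\<lambda>k. fa_mult (fa_star q (N k ?x')) (fa_star q (M ?y' k)))"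
  have "mstar q (mat_mult M N) x y = fa_star q (fa_sum B (\<lambda>k. fa_mult (M ?y' k) (N k ?x')))"
    unfolding mstar_apply B_def using n by (subst mat_mult_eq_fa_sum) auto
  also have "\<dots> = fa_sum B h"
    by (simp add: fa_star_sum fa_star_mult h_def)
  also have "\<dots> = fa_sum B (\<lambda>k. h (\<not> fst k, snd k))"
    unfolding fa_sum_def B_def
    by (intro ext sum.reindex_bij_witness[where i = "\<lambda>k. (\<not> fst k, snd k)" and j = "\<lambda>k. (\<not> fst k, snd k)"])
       (auto simp: idx_below_def)
  also have "\<dots> = fa_sum B (\<lambda>k. fa_mult (mstar q N x k) (mstar q M k y))"
    by (simp add: mstar_apply h_def)
  also have "\<dots> = mat_mult (mstar q N) (mstar q M) x y"
    unfolding B_def using n id_beyond_mstar by (intro mat_mult_eq_fa_sum[symmetric]) auto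
  finally show "mstar q (mat_mult M N) x y w = mat_mult (mstar q N) (mstar q M) x y w" by simp
qed

lemma mat_cls_eq:
  "finitary M \<Longrightarrow> finitary N \<Longrightarrow> mat_pod_eq q M N \<Longrightarrow> mat_cls q M = mat_cls q N"
  unfolding mat_cls_def by (blast intro: mat_pod_eq_trans mat_pod_eq_sym)

lemma some_mat_cls:
  assumes "finitary M"
  shows "finitary (SOME N. N \<in> mat_cls q M) \<and> mat_pod_eq q (SOME N. N \<in> mat_cls q M) M"
proof -
  have "M \<in> mat_cls q M" using assms by (simp add: mat_cls_def)
  then have "(SOME N. N \<in> mat_cls q M) \<in> mat_cls q M" by (rule someI[of "\<lambda>N. N \<in> mat_cls q M"])
  then show ?thesis by (simp add: mat_cls_def)
qed

lemma U_group_carrier: "carrier (U_group q eps) = mat_cls q ` U_reps q eps"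
  by (simp add: U_group_def)

lemma U_group_one: "\<one>\<^bsub>U_group q eps\<^esub> = mat_cls q mat_id"
  by (simp add: U_group_def)

lemma U_group_mult_mat_cls:
  assumes M: "finitary M" and N: "finitary N"
  shows "mat_cls q M \<otimes>\<^bsub>U_group q eps\<^esub> mat_cls q N = mat_cls q (mat_mult M N)"
proof -
  let ?M = "SOME M'. M' \<in> mat_cls q M" and ?N = "SOME N'. N' \<in> mat_cls q N"
  have "mat_cls q (mat_mult ?M ?N) = mat_cls q (mat_mult M N)"
    using some_mat_cls[OF M] some_mat_cls[OF N] M N
    by (intro mat_cls_eq finitary_mult mat_pod_eq_mult) auto
  then show ?thesis by (simp add: U_group_def)
qed

lemma U_reps_finitary: "M \<in> U_reps q eps \<Longrightarrow> finitary M"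
  by (simp add: U_reps_def)

lemma mstar_U_reps: "q \<noteq> 0 \<Longrightarrow> M \<in> U_reps q 1 \<Longrightarrow> mstar q M \<in> U_reps q 1"
  unfolding U_reps_def by (auto simp: mstar_mstar finitary_mstar)

lemma mult_U_reps:
  assumes M: "M \<in> U_reps q 1" and N: "N \<in> U_reps q 1"
  shows "mat_mult M N \<in> U_reps q 1"
proof -
  have fin: "finitary M" "finitary (mstar q M)" "finitary N" "finitary (mstar q N)"
    using M N U_reps_finitary finitary_mstar by blast+
  then have fin': "finitary (mat_mult (mstar q M) M)" "finitary (mat_mult N (mstar q N))"
    by (auto intro: finitary_mult)
  have M1: "mat_pod_eq q (mat_mult (mstar q M) M) mat_id" "mat_pod_eq q (mat_mult M (mstar q M)) mat_id"
    and N1: "mat_pod_eq q (mat_mult (mstar q N) N) mat_id" "mat_pod_eq q (mat_mult N (mstar q N)) mat_id"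
    using M N unfolding U_reps_def by blast+
  have "mat_mult (mstar q (mat_mult M N)) (mat_mult M N)
      = mat_mult (mstar q N) (mat_mult (mat_mult (mstar q M) M) N)"
    using fin by (simp add: mstar_mult mat_mult_assoc finitary_mult)
  moreover have "mat_pod_eq q (mat_mult (mstar q N) (mat_mult (mat_mult (mstar q M) M) N))
      (mat_mult (mstar q N) (mat_mult mat_id N))"
    using M1 fin fin' by (intro mat_pod_eq_mult mat_pod_eq_refl) (auto intro: finitary_mult)
  ultimately have left: "mat_pod_eq q (mat_mult (mstar q (mat_mult M N)) (mat_mult M N)) mat_id"
    using N1(1) by (auto intro: mat_pod_eq_trans)
  have "mat_mult (mat_mult M N) (mstar q (mat_mult M N))
      = mat_mult M (mat_mult (mat_mult N (mstar q N)) (mstar q M))"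
    using fin by (simp add: mstar_mult mat_mult_assoc finitary_mult)
  moreover have "mat_pod_eq q (mat_mult M (mat_mult (mat_mult N (mstar q N)) (mstar q M)))
      (mat_mult M (mat_mult mat_id (mstar q M)))"
    using N1 fin fin' by (intro mat_pod_eq_mult mat_pod_eq_refl) (auto intro: finitary_mult)
  ultimately have right: "mat_pod_eq q (mat_mult (mat_mult M N) (mstar q (mat_mult M N))) mat_id"
    using M1(2) by (auto intro: mat_pod_eq_trans)
  show ?thesis
    unfolding U_reps_def using finitary_mult[OF fin(1,3)] left right by blast
qed

lemma U_group_is_group:
  assumes q: "q \<noteq> 0"
  shows "group (U_group q 1)"
proof (rule groupI)
  fix x y
  assume "x \<in> carrier (U_group q 1)" "y \<in> carrier (U_group q 1)"
  then obtain M N where "M \<in> U_reps q 1" "N \<in> U_reps q 1" "x = mat_cls q M" "y = mat_cls q N"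
    by (auto simp: U_group_carrier)
  then show "x \<otimes>\<^bsub>U_group q 1\<^esub> y \<in> carrier (U_group q 1)"
    by (simp add: U_group_mult_mat_cls U_reps_finitary U_group_carrier mult_U_reps)
next
  show "\<one>\<^bsub>U_group q 1\<^esub> \<in> carrier (U_group q 1)"
    by (simp add: U_group_one U_group_carrier U_reps_def)
next
  fix x y z
  assume "x \<in> carrier (U_group q 1)" "y \<in> carrier (U_group q 1)" "z \<in> carrier (U_group q 1)"
  then obtain M N P where "M \<in> U_reps q 1" "N \<in> U_reps q 1" "P \<in> U_reps q 1"
    and "x = mat_cls q M" "y = mat_cls q N" "z = mat_cls q P"
    by (auto simp: U_group_carrier)
  then show "x \<otimes>\<^bsub>U_group q 1\<^esub> y \<otimes>\<^bsub>U_group q 1\<^esub> z = x \<otimes>\<^bsub>U_group q 1\<^esub> (y \<otimes>\<^bsub>U_group q 1\<^esub> z)"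
    by (simp add: U_group_mult_mat_cls U_reps_finitary finitary_mult mat_mult_assoc)
next
  fix x
  assume "x \<in> carrier (U_group q 1)"
  then obtain M where M: "M \<in> U_reps q 1" "x = mat_cls q M" by (auto simp: U_group_carrier)
  then show "\<one>\<^bsub>U_group q 1\<^esub> \<otimes>\<^bsub>U_group q 1\<^esub> x = x"
    by (simp add: U_group_one U_group_mult_mat_cls U_reps_finitary)
next
  fix x
  assume "x \<in> carrier (U_group q 1)"
  then obtain M where M: "M \<in> U_reps q 1" "x = mat_cls q M" by (auto simp: U_group_carrier)
  have fin: "finitary M" "finitary (mstar q M)" using M by (auto simp: U_reps_finitary finitary_mstar)
  have "mat_cls q (mstar q M) \<in> carrier (U_group q 1)"
    using mstar_U_reps[OF q M(1)] by (simp add: U_group_carrier)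
  moreover have "mat_cls q (mstar q M) \<otimes>\<^bsub>U_group q 1\<^esub> x = \<one>\<^bsub>U_group q 1\<^esub>"
    using M fin unfolding M(2) U_group_mult_mat_cls[OF fin(2,1)] U_group_one
    by (intro mat_cls_eq finitary_mult finitary_mat_id) (auto simp: U_reps_def)
  ultimately show "\<exists>y\<in>carrier (U_group q 1). y \<otimes>\<^bsub>U_group q 1\<^esub> x = \<one>\<^bsub>U_group q 1\<^esub>" by blast
qed

section \<open>The determinant of the entrywise character\<close>

text \<open>Indices are enumerated as \<open>(False,0), (True,0), (False,1), \<dots>\<close>, so that the first \<open>2n\<close>
  indices are exactly those of the \<open>2n \<times> 2n\<close> block and stabilisation adds two indices at the end.\<close>

definition idx_of_nat :: "nat \<Rightarrow> idx" where
  "idx_of_nat r = (odd r, r div 2)"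

definition nat_of_idx :: "idx \<Rightarrow> nat" where
  "nat_of_idx k = 2 * snd k + (if fst k then 1 else 0)"

lemma nat_of_idx_of_nat[simp]: "nat_of_idx (idx_of_nat r) = r"
  by (simp add: nat_of_idx_def idx_of_nat_def)

lemma idx_of_nat_of_idx[simp]: "idx_of_nat (nat_of_idx k) = k"
  by (cases k) (auto simp: nat_of_idx_def idx_of_nat_def)

lemma idx_of_nat_eq_iff: "idx_of_nat r = idx_of_nat c \<longleftrightarrow> r = c"
  by (metis nat_of_idx_of_nat)

lemma nat_of_idx_less: "snd k < n \<Longrightarrow> nat_of_idx k < 2 * n"
  by (simp add: nat_of_idx_def)

lemma snd_idx_of_nat: "snd (idx_of_nat r) = r div 2"
  by (simp add: idx_of_nat_def)

definition chi_block :: "real \<Rightarrow> nat \<Rightarrow> Defs.mat \<Rightarrow> complex Matrix.mat" where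
  "chi_block q n M = mat (2 * n) (2 * n) (\<lambda>(r, c). chi q (M (idx_of_nat r) (idx_of_nat c)))"

lemma chi_block_carrier: "chi_block q n M \<in> carrier_mat (2 * n) (2 * n)"
  by (simp add: chi_block_def)

lemma chi_block_Suc:
  assumes "id_beyond M m"
  shows "chi_block q (Suc m) M = four_block_mat (chi_block q m M) (0\<^sub>m (2 * m) 2) (0\<^sub>m 2 (2 * m)) (1\<^sub>m 2)"
proof (rule eq_matI)
  fix r c
  assume "r < dim_row (four_block_mat (chi_block q m M) (0\<^sub>m (2 * m) 2) (0\<^sub>m 2 (2 * m)) (1\<^sub>m 2))"
    and "c < dim_col (four_block_mat (chi_block q m M) (0\<^sub>m (2 * m) 2) (0\<^sub>m 2 (2 * m)) (1\<^sub>m 2))"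
  then have r: "r < 2 * m + 2" and c: "c < 2 * m + 2" by (auto simp: chi_block_def)
  show "chi_block q (Suc m) M $$ (r, c) =
      four_block_mat (chi_block q m M) (0\<^sub>m (2 * m) 2) (0\<^sub>m 2 (2 * m)) (1\<^sub>m 2) $$ (r, c)"
  proof (cases "r < 2 * m \<and> c < 2 * m")
    case True
    then show ?thesis using r c by (simp add: chi_block_def)
  next
    case False
    then have "snd (idx_of_nat r) \<ge> m \<or> snd (idx_of_nat c) \<ge> m" by (auto simp: snd_idx_of_nat)
    then have "M (idx_of_nat r) (idx_of_nat c) = mat_id (idx_of_nat r) (idx_of_nat c)"
      using assms unfolding id_beyond_def by blast
    then have "chi q (M (idx_of_nat r) (idx_of_nat c)) = (if r = c then 1 else 0)"
      by (simp add: mat_id_def idx_of_nat_eq_iff)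
    then show ?thesis using r c False by (auto simp: chi_block_def)
  qed
qed (auto simp: chi_block_def)

lemma det_chi_block_stable:
  assumes "id_beyond M n" "n \<le> m"
  shows "det (chi_block q m M) = det (chi_block q n M)"
  using assms(2)
proof (induction m rule: dec_induct)
  case (step m)
  have m: "id_beyond M m" using assms(1) step(1) by (rule id_beyond_mono)
  have "det (chi_block q (Suc m) M) = det (chi_block q m M) * det (1\<^sub>m 2 :: complex Matrix.mat)"
    unfolding chi_block_Suc[OF m] by (rule det_four_block_mat_upper_right_zero[OF chi_block_carrier]) auto
  then show ?case using step by simp
qed simp

definition chi_det :: "real \<Rightarrow> Defs.mat \<Rightarrow> complex" where
  "chi_det q M = det (chi_block q (LEAST n. id_beyond M n) M)"

lemma chi_det_eq: "id_beyond M n \<Longrightarrow> chi_det q M = det (chi_block q n M)"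
  unfolding chi_det_def by (metis det_chi_block_stable LeastI Least_le)

lemma chi_block_mult:
  assumes M: "finitary M" and N: "finitary N" and n: "id_beyond M n" "id_beyond N n"
  shows "chi_block q n (mat_mult M N) = chi_block q n M * chi_block q n N"
proof (rule eq_matI)
  fix r c
  assume "r < dim_row (chi_block q n M * chi_block q n N)" "c < dim_col (chi_block q n M * chi_block q n N)"
  then have r: "r < 2 * n" and c: "c < 2 * n" by (auto simp: chi_block_def)
  have "mat_mult M N (idx_of_nat r) (idx_of_nat c)
      = fa_sum (idx_below n) (\<lambda>k. fa_mult (M (idx_of_nat r) k) (N k (idx_of_nat c)))"
    using n r by (intro mat_mult_eq_fa_sum) (auto simp: snd_idx_of_nat)
  then have "chi q (mat_mult M N (idx_of_nat r) (idx_of_nat c))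
      = (\<Sum>k\<in>idx_below n. chi q (M (idx_of_nat r) k) * chi q (N k (idx_of_nat c)))"
    using M N by (simp add: chi_sum chi_mult finitary_fa_fin)
  also have "\<dots> = (\<Sum>t\<in>{0..<2 * n}. chi q (M (idx_of_nat r) (idx_of_nat t)) * chi q (N (idx_of_nat t) (idx_of_nat c)))"
    by (rule sum.reindex_bij_witness[where i = idx_of_nat and j = nat_of_idx])
       (auto simp: idx_below_def snd_idx_of_nat nat_of_idx_less)
  finally show "chi_block q n (mat_mult M N) $$ (r, c) = (chi_block q n M * chi_block q n N) $$ (r, c)"
    using r c by (simp add: chi_block_def scalar_prod_def)
qed (auto simp: chi_block_def)

lemma chi_det_mult:
  assumes M: "finitary M" and N: "finitary N"
  shows "chi_det q (mat_mult M N) = chi_det q M * chi_det q N"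
proof -
  obtain n where n: "id_beyond M n" "id_beyond N n" using finitary_common_bound[OF M N] by blast
  have "chi_det q (mat_mult M N) = det (chi_block q n M * chi_block q n N)"
    using chi_det_eq[OF id_beyond_mult[OF n]] chi_block_mult[OF M N n] by simp
  also have "\<dots> = det (chi_block q n M) * det (chi_block q n N)"
    by (rule det_mult[OF chi_block_carrier chi_block_carrier])
  finally show ?thesis using chi_det_eq n by simp
qed

lemma chi_det_mat_pod_eq:
  assumes q: "q \<noteq> 0" and M: "finitary M" and N: "finitary N" and eq: "mat_pod_eq q M N"
  shows "chi_det q M = chi_det q N"
proof -
  obtain n where n: "id_beyond M n" "id_beyond N n" using finitary_common_bound[OF M N] by blast
  have "pod_eq q (M i j) (N i j)" for i j
    using eq unfolding mat_pod_eq_def by blast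
  then have "chi_block q n M = chi_block q n N"
    unfolding chi_block_def by (intro eq_matI) (auto simp: chi_pod_eq[OF q] finitary_fa_fin[OF M] finitary_fa_fin[OF N])
  then show ?thesis using chi_det_eq n by simp
qed

lemma chi_det_id: "chi_det q mat_id = 1"
proof -
  have "id_beyond mat_id 0" by (simp add: id_beyond_def)
  then have "chi_det q mat_id = det (chi_block q 0 mat_id)" by (rule chi_det_eq)
  also have "chi_block q 0 mat_id = 1\<^sub>m 0" by (auto simp: chi_block_def)
  finally show ?thesis by simp
qed

definition cls_det :: "real \<Rightarrow> Defs.mat set \<Rightarrow> complex" where
  "cls_det q S = chi_det q (SOME M. M \<in> S)"

lemma cls_det_mat_cls: "q \<noteq> 0 \<Longrightarrow> finitary M \<Longrightarrow> cls_det q (mat_cls q M) = chi_det q M"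
  unfolding cls_det_def using some_mat_cls chi_det_mat_pod_eq by blast

lemma cls_det_mult:
  assumes q: "q \<noteq> 0" and x: "x \<in> carrier (U_group q 1)" and y: "y \<in> carrier (U_group q 1)"
  shows "cls_det q (x \<otimes>\<^bsub>U_group q 1\<^esub> y) = cls_det q x * cls_det q y"
proof -
  obtain M N where "M \<in> U_reps q 1" "N \<in> U_reps q 1" "x = mat_cls q M" "y = mat_cls q N"
    using x y by (auto simp: U_group_carrier)
  then show ?thesis
    by (simp add: q U_group_mult_mat_cls U_reps_finitary cls_det_mat_cls finitary_mult chi_det_mult)
qed

section \<open>A unitary of determinant \<open>-1\<close>\<close>

definition scalar_diag :: "(idx \<Rightarrow> complex) \<Rightarrow> Defs.mat" where
  "scalar_diag a = (\<lambda>i j. if i = j then fa_smult (a i) fa_one else fa_zero)"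

lemma mat_mult_scalar_diag: "mat_mult (scalar_diag a) (scalar_diag b) = scalar_diag (\<lambda>i. a i * b i)"
proof (intro ext)
  fix i j :: idx and w
  have "mat_mult (scalar_diag a) (scalar_diag b) i j = fa_mult (scalar_diag a i i) (scalar_diag b i j)"
    by (rule mat_mult_single_left) (simp add: scalar_diag_def)
  also have "\<dots> = scalar_diag (\<lambda>i. a i * b i) i j"
  proof (cases "i = j")
    case True
    then show ?thesis
      by (simp add: scalar_diag_def fa_mult_smult_left fa_mult_smult_right) (simp add: fa_smult_def mult_ac)
  qed (simp add: scalar_diag_def fa_mult_def fa_zero_def)
  finally show "mat_mult (scalar_diag a) (scalar_diag b) i j w = scalar_diag (\<lambda>i. a i * b i) i j w"
    by simp
qed

lemma scalar_diag_one: "scalar_diag (\<lambda>i. 1) = mat_id"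
  by (auto intro!: ext simp: scalar_diag_def mat_id_def fa_smult_def)

lemma mstar_scalar_diag:
  "(\<And>i. a (\<not> fst i, snd i) = a i) \<Longrightarrow> mstar q (scalar_diag a) = scalar_diag (\<lambda>i. cnj (a i))"
  by (auto intro!: ext simp: mstar_apply scalar_diag_def fa_star_scalar prod_eq_iff)

definition i_diag :: Defs.mat where
  "i_diag = scalar_diag (\<lambda>k. if snd k = 0 then \<i> else 1)"

lemma id_beyond_i_diag: "id_beyond i_diag 1"
  by (auto simp: id_beyond_def i_diag_def scalar_diag_def mat_id_def fa_smult_def)

lemma finitary_i_diag: "finitary i_diag"
  unfolding finitary_iff using id_beyond_i_diag by (auto simp: i_diag_def scalar_diag_def)

lemma i_diag_U_reps: "i_diag \<in> U_reps q 1"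
proof -
  define a :: "idx \<Rightarrow> complex" where "a k = (if snd k = 0 then \<i> else 1)" for k
  have i_diag: "i_diag = scalar_diag a"
    by (simp add: i_diag_def a_def[abs_def])
  have "mstar q i_diag = scalar_diag (\<lambda>k. cnj (a k))"
    unfolding i_diag by (rule mstar_scalar_diag) (simp add: a_def)
  moreover have "cnj (a k) * a k = 1" "a k * cnj (a k) = 1" for k
    by (auto simp: a_def)
  ultimately show ?thesis
    unfolding U_reps_def using finitary_i_diag
    by (simp add: i_diag mat_mult_scalar_diag scalar_diag_one)
qed

lemma chi_det_i_diag: "chi_det q i_diag = -1"
proof -
  have "chi_det q i_diag = det (chi_block q 1 i_diag)"
    using id_beyond_i_diag by (rule chi_det_eq)
  also have "\<dots> = prod_list (diag_mat (chi_block q 1 i_diag))"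
    by (rule det_upper_triangular[OF _ chi_block_carrier])
       (auto simp: upper_triangular_def chi_block_def i_diag_def scalar_diag_def idx_of_nat_eq_iff)
  also have "\<dots> = -1"
    by (simp add: diag_mat_def chi_block_def i_diag_def scalar_diag_def idx_of_nat_def chi_smult upt_rec)
  finally show ?thesis .
qed

lemma (in group) derived_subset_fibre_one:
  fixes f :: "'a \<Rightarrow> 'c::ab_semigroup_mult"
  assumes mult: "\<And>x y. x \<in> carrier G \<Longrightarrow> y \<in> carrier G \<Longrightarrow> f (x \<otimes> y) = f x * f y"
  shows "derived G (carrier G) \<subseteq> {x \<in> carrier G. f x = f \<one>}"
proof -
  let ?K = "{x \<in> carrier G. f x = f \<one>}"
  have inv: "f (inv x) * f x = f \<one>" if "x \<in> carrier G" for x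
    using mult[of "inv x" x] that by simp
  have "subgroup ?K G"
  proof (rule subgroupI)
    show "inv a \<in> ?K" if "a \<in> ?K" for a
      using that inv[of a] mult[of "inv a" \<one>] by auto
    show "a \<otimes> b \<in> ?K" if "a \<in> ?K" "b \<in> ?K" for a b
      using that mult[of a b] mult[of \<one> \<one>] by auto
  qed auto
  moreover have "derived_set G (carrier G) \<subseteq> ?K"
  proof
    fix h assume "h \<in> derived_set G (carrier G)"
    then obtain x y where xy: "x \<in> carrier G" "y \<in> carrier G"
      and h: "h = x \<otimes> y \<otimes> inv x \<otimes> inv y" by blast
    have "f h = (f (inv x) * f x) * (f (inv y) * f y)"
      using xy by (simp add: h mult mult_ac)
    also have "\<dots> = f \<one>"
      using xy inv mult[of \<one> \<one>] by simp
    finally show "h \<in> ?K" using xy h by simp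
  qed
  ultimately show ?thesis
    unfolding derived_def by (rule generate_subgroup_incl[rotated])
qed

theorem theorem6p3:
  fixes q :: real
  assumes "0 < q" and "q < 1"
  shows "KU1_nontrivial q 1"
proof -
  have q: "q \<noteq> 0" using assms(1) by simp
  interpret U: group "U_group q 1" by (rule U_group_is_group[OF q])
  have "derived (U_group q 1) (carrier (U_group q 1))
      \<subseteq> {x \<in> carrier (U_group q 1). cls_det q x = cls_det q \<one>\<^bsub>U_group q 1\<^esub>}"
    by (rule U.derived_subset_fibre_one) (rule cls_det_mult[OF q])
  moreover have "mat_cls q i_diag \<in> carrier (U_group q 1)"
    using i_diag_U_reps by (simp add: U_group_carrier)
  moreover have "cls_det q (mat_cls q i_diag) \<noteq> cls_det q \<one>\<^bsub>U_group q 1\<^esub>"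
    by (simp add: U_group_one cls_det_mat_cls q finitary_i_diag chi_det_i_diag chi_det_id)
  ultimately show ?thesis
    unfolding KU1_nontrivial_def by blast
qed

end
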